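(* There exists a unique $\mu_{\mathrm{cr}}>0$ such that: (a) the problem $(\dot w_p/H_p^3)_p-\mu\rho_p\dot w=0$ on $(-1,0)$, $\dot w(-1)=0$, $-\dot w_p(0)/H_p(0)^3+\mu\rho(0)\dot w(0)=0$ has a nontrivial solution $\dot w$ for $\mu=\mu_{\mathrm{cr}}$, and one can take $\dot w=\Phi(\cdot;\mu_{\mathrm{cr}})$; (b) if $0\le\mu\le\mu_{\mathrm{cr}}$, then $\Phi(p;\mu)>0$ for $-1<p\le0$ and $\Phi_p(p;\mu)>0$ for $-1\le p\le0$; (c) for $0\le\mu<\mu_{\mathrm{cr}}$, $A(\mu)<0$.
   Context: Fix $\alpha\in(0,1)$, $\rho\in C^{2+\alpha}([-1,0])$ with $\rho>0$ and $\rho_p\le0$, and $H\in C^{3+\alpha}([-1,0])$ with $H_p>0$. For $\mu\ge0$, $\Phi(\cdot;\mu)$ denotes the solution of the initial value problem $(\Phi_p/H_p^3)_p-\mu\rho_p\Phi=0$ on $(-1,0)$, $\Phi(-1)=0$, $\Phi_p(-1)=1$, and $A(\mu):=-\Phi_p(0;\mu)/H_p(0)^3+\mu\rho(0)\Phi(0;\mu)$. *)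

theory Defs
  imports "HOL-Analysis.Analysis"
begin

definition holder_on :: "real \<Rightarrow> real set \<Rightarrow> (real \<Rightarrow> real) \<Rightarrow> bool" where
  "holder_on a S f \<longleftrightarrow> (\<exists>C. \<forall>x\<in>S. \<forall>y\<in>S. \<bar>f x - f y\<bar> \<le> C * \<bar>x - y\<bar> powr a)"

definition C_k_alpha :: "nat \<Rightarrow> real \<Rightarrow> real set \<Rightarrow> (real \<Rightarrow> real) \<Rightarrow> bool" where
  "C_k_alpha k a S f \<longleftrightarrow>
     (\<exists>D :: nat \<Rightarrow> real \<Rightarrow> real.
        (\<forall>x\<in>S. D 0 x = f x) \<and>
        (\<forall>i<k. \<forall>x\<in>S. (D i has_real_derivative D (Suc i) x) (at x within S)) \<and>
        holder_on a S (D k))"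

text \<open>(Phi, Phi') solves on [-1,0] the initial value problem
  (Phi_p / H_p^3)_p - mu rho_p Phi = 0,  Phi(-1) = 0,  Phi_p(-1) = 1.
  Here Hp and rhop denote the derivatives H_p and rho_p.\<close>
definition is_Phi :: "(real \<Rightarrow> real) \<Rightarrow> (real \<Rightarrow> real) \<Rightarrow> real
                      \<Rightarrow> (real \<Rightarrow> real) \<Rightarrow> (real \<Rightarrow> real) \<Rightarrow> bool" where
  "is_Phi Hp rhop mu Phi Phi' \<longleftrightarrow>
     Phi (-1) = 0 \<and> Phi' (-1) = 1 \<and>
     (\<forall>x\<in>{-1..0}. (Phi has_real_derivative Phi' x) (at x within {-1..0})) \<and>
     (\<forall>x\<in>{-1..0}. ((\<lambda>p. Phi' p / Hp p ^ 3) has_real_derivative mu * rhop x * Phi x)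
                     (at x within {-1..0}))"

text \<open>The solution Phi(.;mu) together with its derivative Phi_p(.;mu), normalised to 0
  outside [-1,0] so that it is uniquely determined.\<close>
definition Phi_pair :: "(real \<Rightarrow> real) \<Rightarrow> (real \<Rightarrow> real) \<Rightarrow> real
                        \<Rightarrow> (real \<Rightarrow> real) \<times> (real \<Rightarrow> real)" where
  "Phi_pair Hp rhop mu = (THE (Phi, Phi'). is_Phi Hp rhop mu Phi Phi' \<and>
       (\<forall>x. x \<notin> {-1..0} \<longrightarrow> Phi x = 0 \<and> Phi' x = 0))"

definition Phi :: "(real \<Rightarrow> real) \<Rightarrow> (real \<Rightarrow> real) \<Rightarrow> real \<Rightarrow> real \<Rightarrow> real" where
  "Phi Hp rhop mu = fst (Phi_pair Hp rhop mu)"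

definition Phi_p :: "(real \<Rightarrow> real) \<Rightarrow> (real \<Rightarrow> real) \<Rightarrow> real \<Rightarrow> real \<Rightarrow> real" where
  "Phi_p Hp rhop mu = snd (Phi_pair Hp rhop mu)"

definition A_fun :: "(real \<Rightarrow> real) \<Rightarrow> (real \<Rightarrow> real) \<Rightarrow> (real \<Rightarrow> real) \<Rightarrow> real \<Rightarrow> real" where
  "A_fun Hp rho rhop mu = - Phi_p Hp rhop mu 0 / Hp 0 ^ 3 + mu * rho 0 * Phi Hp rhop mu 0"

definition is_bvp_sol :: "(real \<Rightarrow> real) \<Rightarrow> (real \<Rightarrow> real) \<Rightarrow> (real \<Rightarrow> real) \<Rightarrow> real
                          \<Rightarrow> (real \<Rightarrow> real) \<Rightarrow> (real \<Rightarrow> real) \<Rightarrow> bool" where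
  "is_bvp_sol Hp rho rhop mu w w' \<longleftrightarrow>
     w (-1) = 0 \<and> - w' 0 / Hp 0 ^ 3 + mu * rho 0 * w 0 = 0 \<and>
     (\<forall>x\<in>{-1..0}. (w has_real_derivative w' x) (at x within {-1..0})) \<and>
     (\<forall>x\<in>{-1..0}. ((\<lambda>p. w' p / Hp p ^ 3) has_real_derivative mu * rhop x * w x)
                     (at x within {-1..0}))"

end

theory Submission
  imports Defs
begin

text \<open>
  With the flux u = Phi_p / H_p^3 the equation becomes the planar system Phi' = H_p^3 u,
  u' = mu rho_p Phi, with Phi(-1) = 0 and u(-1) = 1 / H_p(-1)^3. A Gronwall estimate for
  this system gives existence (by Picard iteration), uniqueness, and Lipschitz dependence of
  (Phi, u) on mu. Call mu admissible if u > 0 on [-1, 0] and A(mu) < 0. Then mu = 0 is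
  admissible, large mu are not, and admissibility is an open condition. At the first
  inadmissible value mu_cr continuity gives u \<ge> 0 and A(mu_cr) \<le> 0. Since rho_p \<le> 0,
  u is nonincreasing, so a zero of u would give u(0) = 0 < Phi(0) and hence A(mu_cr) > 0.
  Thus u > 0 and A(mu_cr) = 0; uniqueness holds because A < 0 on [0, mu_cr).
\<close>

section \<open>Monotonicity and a Gronwall estimate\<close>

lemma DERIV_within_nonpos_imp_decreasing:
  fixes f f' :: "real \<Rightarrow> real"
  assumes deriv: "\<forall>x\<in>{a..b}. (f has_real_derivative f' x) (at x within {a..b})"
    and nonpos: "\<forall>x\<in>{a..b}. f' x \<le> 0" and st: "a \<le> s" "s \<le> t" "t \<le> b"
  shows "f t \<le> f s"
proof (rule DERIV_nonpos_imp_decreasing_open[OF \<open>s \<le> t\<close>])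
  show "continuous_on {s..t} f"
    using DERIV_continuous_on[of "{a..b}" f f'] deriv st by (auto intro: continuous_on_subset)
  fix x assume "s < x" "x < t"
  with st have "at x within {a..b} = at x" "x \<in> {a..b}" by (auto intro: at_within_Icc_at)
  then show "\<exists>y. DERIV f x :> y \<and> y \<le> 0" using deriv nonpos by force
qed

lemma DERIV_within_nonneg_imp_increasing:
  fixes f f' :: "real \<Rightarrow> real"
  assumes "\<forall>x\<in>{a..b}. (f has_real_derivative f' x) (at x within {a..b})"
    and "\<forall>x\<in>{a..b}. f' x \<ge> 0" and "a \<le> s" "s \<le> t" "t \<le> b"
  shows "f s \<le> f t"
proof -
  have "(\<lambda>x. - f x) t \<le> (\<lambda>x. - f x) s"
    by (rule DERIV_within_nonpos_imp_decreasing[where f'="\<lambda>x. - f' x"])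
      (use assms in \<open>auto intro!: derivative_eq_intros\<close>)
  then show ?thesis by simp
qed

lemma DERIV_within_pos_imp_strict_increasing:
  fixes f f' :: "real \<Rightarrow> real"
  assumes deriv: "\<forall>x\<in>{a..b}. (f has_real_derivative f' x) (at x within {a..b})"
    and pos: "\<forall>x\<in>{a..b}. f' x > 0" and st: "a \<le> s" "s < t" "t \<le> b"
  shows "f s < f t"
proof (rule DERIV_pos_imp_increasing_open[OF \<open>s < t\<close>])
  show "continuous_on {s..t} f"
    using DERIV_continuous_on[of "{a..b}" f f'] deriv st by (auto intro: continuous_on_subset)
  fix x assume "s < x" "x < t"
  with st have "at x within {a..b} = at x" "x \<in> {a..b}" by (auto intro: at_within_Icc_at)
  then show "\<exists>y. DERIV f x :> y \<and> y > 0" using deriv pos by force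
qed

lemma DERIV_within_zero_imp_constant:
  fixes f :: "real \<Rightarrow> real"
  assumes "\<forall>x\<in>{a..b}. (f has_real_derivative 0) (at x within {a..b})" and "x \<in> {a..b}"
  shows "f x = f a"
  using DERIV_within_nonpos_imp_decreasing[of a b f "\<lambda>_. 0" a x]
    DERIV_within_nonneg_imp_increasing[of a b f "\<lambda>_. 0" a x] assms
  by fastforce

lemma has_real_derivative_transform_within:
  fixes f g :: "real \<Rightarrow> real"
  assumes "x \<in> S" "\<And>y. y \<in> S \<Longrightarrow> g y = f y" "(f has_real_derivative D) (at x within S)"
  shows "(g has_real_derivative D) (at x within S)"
  using assms unfolding has_field_derivative_def by (rule has_derivative_transform)

lemma abs_le_of_sum_squares_le:
  fixes x y B :: real
  assumes "x\<^sup>2 + y\<^sup>2 \<le> B\<^sup>2" "0 \<le> B"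
  shows "\<bar>x\<bar> \<le> B" "\<bar>y\<bar> \<le> B"
  using assms abs_le_square_iff[of x B] abs_le_square_iff[of y B]
    zero_le_power2[of x] zero_le_power2[of y] by auto

lemma continuous_on_Icc_abs_le:
  fixes f :: "real \<Rightarrow> real"
  assumes "continuous_on {a..b} f"
  obtains B where "0 \<le> B" "\<forall>s\<in>{a..b}. \<bar>f s\<bar> \<le> B"
  using compact_imp_bounded[OF compact_continuous_image[OF assms compact_Icc]]
  unfolding bounded_pos by (auto intro: less_imp_le)

lemma energy_derivative_bound:
  fixes x y x' y' L E :: real
  assumes x': "\<bar>x'\<bar> \<le> L * \<bar>y\<bar> + E" and y': "\<bar>y'\<bar> \<le> L * \<bar>x\<bar> + E" and "0 \<le> L" "0 \<le> E"
  shows "2*x*x' + 2*y*y' \<le> (2*L + 2) * (x\<^sup>2 + y\<^sup>2 + E\<^sup>2)"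
proof -
  have xy: "2*\<bar>x\<bar>*\<bar>y\<bar> \<le> x\<^sup>2 + y\<^sup>2" and Ex: "2*E*\<bar>x\<bar> \<le> E\<^sup>2 + x\<^sup>2" and Ey: "2*E*\<bar>y\<bar> \<le> E\<^sup>2 + y\<^sup>2"
    using sum_squares_ge_zero[of "\<bar>x\<bar> - \<bar>y\<bar>" 0] sum_squares_ge_zero[of "E - \<bar>x\<bar>" 0]
      sum_squares_ge_zero[of "E - \<bar>y\<bar>" 0] by (simp_all add: power2_eq_square algebra_simps)
  have "2*x*x' + 2*y*y' \<le> 2*\<bar>x\<bar>*(L*\<bar>y\<bar> + E) + 2*\<bar>y\<bar>*(L*\<bar>x\<bar> + E)"
    using mult_left_mono[OF x', of "\<bar>x\<bar>"] mult_left_mono[OF y', of "\<bar>y\<bar>"]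
      abs_ge_self[of "x*x'"] abs_ge_self[of "y*y'"] by (simp add: abs_mult)
  also have "\<dots> = 2*L*(2*\<bar>x\<bar>*\<bar>y\<bar>) + 2*E*\<bar>x\<bar> + 2*E*\<bar>y\<bar>" by (simp add: algebra_simps)
  also have "\<dots> \<le> 2*L*(x\<^sup>2 + y\<^sup>2) + (E\<^sup>2 + x\<^sup>2) + (E\<^sup>2 + y\<^sup>2)"
    using mult_left_mono[OF xy, of "2*L"] Ex Ey \<open>0 \<le> L\<close> by simp
  also have "\<dots> \<le> (2*L + 2) * (x\<^sup>2 + y\<^sup>2 + E\<^sup>2)"
    using \<open>0 \<le> L\<close> by (simp add: algebra_simps)
  finally show ?thesis .
qed

lemma planar_energy_gronwall:
  fixes x y x' y' :: "real \<Rightarrow> real" and L E :: real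
  assumes dx: "\<forall>p\<in>{a..b}. (x has_real_derivative x' p) (at p within {a..b})"
    and dy: "\<forall>p\<in>{a..b}. (y has_real_derivative y' p) (at p within {a..b})"
    and bx: "\<forall>p\<in>{a..b}. \<bar>x' p\<bar> \<le> L * \<bar>y p\<bar> + E"
    and by': "\<forall>p\<in>{a..b}. \<bar>y' p\<bar> \<le> L * \<bar>x p\<bar> + E"
    and L: "0 \<le> L" and E: "0 \<le> E" and p: "p \<in> {a..b}"
  shows "(x p)\<^sup>2 + (y p)\<^sup>2 + E\<^sup>2 \<le> ((x a)\<^sup>2 + (y a)\<^sup>2 + E\<^sup>2) * exp ((2*L + 2) * (p - a))"
proof -
  define K where "K = 2*L + 2"
  define V where "V = (\<lambda>q. (x q)\<^sup>2 + (y q)\<^sup>2 + E\<^sup>2)"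
  define W where "W = (\<lambda>q. V q * exp (- K * (q - a)))"
  have "\<forall>q\<in>{a..b}. (W has_real_derivative
      (2*x q*x' q + 2*y q*y' q) * exp (- K * (q - a)) - K * (V q * exp (- K * (q - a))))
      (at q within {a..b})"
  proof
    fix q assume q: "q \<in> {a..b}"
    show "(W has_real_derivative
      (2*x q*x' q + 2*y q*y' q) * exp (- K * (q - a)) - K * (V q * exp (- K * (q - a))))
      (at q within {a..b})"
      unfolding W_def V_def using dx[rule_format, OF q] dy[rule_format, OF q]
      by (auto intro!: derivative_eq_intros simp: algebra_simps)
  qed
  moreover have "\<forall>q\<in>{a..b}. (2*x q*x' q + 2*y q*y' q) * exp (- K * (q - a))
      - K * (V q * exp (- K * (q - a))) \<le> 0"
  proof
    fix q assume "q \<in> {a..b}"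
    then have "2*x q*x' q + 2*y q*y' q \<le> K * V q"
      using energy_derivative_bound[OF _ _ L E] bx by' unfolding K_def V_def by blast
    then show "(2*x q*x' q + 2*y q*y' q) * exp (- K * (q - a))
      - K * (V q * exp (- K * (q - a))) \<le> 0" by (simp add: mult_right_mono)
  qed
  ultimately have "W p \<le> W a" by (rule DERIV_within_nonpos_imp_decreasing) (use p in auto)
  then have "W p * exp (K * (p - a)) \<le> V a * exp (K * (p - a))"
    unfolding W_def by (simp add: mult_right_mono)
  moreover have "W p * exp (K * (p - a)) = V p" unfolding W_def by (simp add: mult.assoc flip: exp_add)
  ultimately show ?thesis unfolding V_def K_def by simp
qed

lemma nonneg_if_pos_before_and_lipschitz:
  fixes f :: "real \<Rightarrow> real"
  assumes m: "0 < m" and C: "0 \<le> C"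
    and before: "\<And>nu. 0 \<le> nu \<Longrightarrow> nu < m \<Longrightarrow> 0 < f nu \<and> \<bar>f m - f nu\<bar> \<le> C * \<bar>m - nu\<bar>"
  shows "0 \<le> f m"
proof (rule ccontr)
  assume neg: "\<not> 0 \<le> f m"
  define s where "s = - f m / (2 * (C + 1))"
  define t where "t = min m s / 2"
  have "0 < s" using neg C unfolding s_def by (intro divide_pos_pos) auto
  then have t: "0 < t" "t < m" "t \<le> - f m / (2 * (C + 1))" using m unfolding t_def s_def[symmetric] by auto
  have "C * t \<le> (C + 1) * t" using t by simp
  also have "\<dots> \<le> (C + 1) * (- f m / (2 * (C + 1)))" using t C by (intro mult_left_mono) auto
  also have "\<dots> = - f m / 2" using C by (simp add: field_simps)
  finally have "C * t \<le> - f m / 2" .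
  moreover have "0 < f (m - t)" "\<bar>f m - f (m - t)\<bar> \<le> C * \<bar>m - (m - t)\<bar>" using before[of "m - t"] t by auto
  ultimately show False using t neg by auto
qed

section \<open>Picard iteration for linear planar systems\<close>

lemma has_integral_power_shifted:
  fixes p t0 :: real
  assumes "t0 \<le> p"
  shows "((\<lambda>s. (s - t0)^n) has_integral (p - t0)^Suc n / Suc n) {t0..p}"
proof -
  have "((\<lambda>s. (s - t0)^n) has_integral (p - t0)^Suc n / Suc n - (t0 - t0)^Suc n / Suc n) {t0..p}"
  proof (rule fundamental_theorem_of_calculus[OF assms])
    fix x assume "x \<in> {t0..p}"
    have "((\<lambda>s. (s - t0)^Suc n / Suc n) has_real_derivative (x - t0)^n) (at x within {t0..p})"
      by (auto intro!: derivative_eq_intros simp del: of_nat_Suc) (cases n; simp add: field_simps)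
    then show "((\<lambda>s. (s - t0)^Suc n / Suc n) has_vector_derivative (x - t0)^n) (at x within {t0..p})"
      by (simp add: has_real_derivative_iff_has_vector_derivative)
  qed
  then show ?thesis by simp
qed

lemma integral_mult_diff_le:
  fixes a f g :: "real \<Rightarrow> real"
  assumes ca: "continuous_on {t0..t1} a" and cf: "continuous_on {t0..t1} f"
    and cg: "continuous_on {t0..t1} g"
    and a: "\<forall>s\<in>{t0..t1}. \<bar>a s\<bar> \<le> L" and fg: "\<forall>s\<in>{t0..t1}. \<bar>f s - g s\<bar> \<le> K * (s - t0)^n"
    and p: "p \<in> {t0..t1}"
  shows "\<bar>integral {t0..p} (\<lambda>s. a s * f s) - integral {t0..p} (\<lambda>s. a s * g s)\<bar>
    \<le> L * K * ((p - t0)^Suc n / Suc n)"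
proof -
  have sub: "{t0..p} \<subseteq> {t0..t1}" using p by auto
  have int: "(\<lambda>s. a s * h s) integrable_on {t0..p}" if "continuous_on {t0..t1} h" for h
    by (rule integrable_continuous_interval, rule continuous_on_subset[OF _ sub])
      (intro continuous_intros ca that)
  have bound: "((\<lambda>s. L * K * (s - t0)^n) has_integral L * K * ((p - t0)^Suc n / Suc n)) {t0..p}"
    using has_integral_mult_right[where c="L * K", OF has_integral_power_shifted[of t0 p n]] p
    by (simp add: mult.assoc)
  have "\<bar>integral {t0..p} (\<lambda>s. a s * f s - a s * g s)\<bar> \<le> integral {t0..p} (\<lambda>s. L * K * (s - t0)^n)"
  proof (rule integral_norm_bound_integral[where 'a=real, simplified])
    show "(\<lambda>s. a s * f s - a s * g s) integrable_on {t0..p}" using int[OF cf] int[OF cg] by (rule integrable_diff)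
    show "(\<lambda>s. L * K * (s - t0)^n) integrable_on {t0..p}" using bound by blast
    fix s assume "s \<in> {t0..p}"
    then have "\<bar>a s\<bar> \<le> L" "\<bar>f s - g s\<bar> \<le> K * (s - t0)^n" using a fg sub by auto
    then have "\<bar>a s\<bar> * \<bar>f s - g s\<bar> \<le> L * (K * (s - t0)^n)"
      by (intro mult_mono) (auto intro: order_trans[OF abs_ge_zero])
    then show "\<bar>a s * f s - a s * g s\<bar> \<le> L * K * (s - t0)^n"
      by (simp add: abs_mult mult.assoc flip: right_diff_distrib)
  qed
  then show ?thesis
    using integral_diff[OF int[OF cf] int[OF cg]] integral_unique[OF bound] by simp
qed

primrec picard_iterate :: "real \<Rightarrow> (real \<Rightarrow> real) \<Rightarrow> (real \<Rightarrow> real) \<Rightarrow> real \<Rightarrow> nat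
    \<Rightarrow> (real \<Rightarrow> real) \<times> (real \<Rightarrow> real)" where
  "picard_iterate t0 a b c 0 = (\<lambda>_. 0, \<lambda>_. 0)"
| "picard_iterate t0 a b c (Suc n) =
    (\<lambda>p. integral {t0..p} (\<lambda>s. a s * snd (picard_iterate t0 a b c n) s),
     \<lambda>p. c + integral {t0..p} (\<lambda>s. b s * fst (picard_iterate t0 a b c n) s))"

lemma continuous_on_integral_Icc:
  fixes g :: "real \<Rightarrow> real"
  assumes "continuous_on {t0..t1} g"
  shows "continuous_on {t0..t1} (\<lambda>p. integral {t0..p} g)"
  using DERIV_continuous_on[OF integral_has_real_derivative[OF assms]] .

lemma continuous_on_picard_iterate:
  fixes a b :: "real \<Rightarrow> real" and c :: real
  assumes "continuous_on {t0..t1} a" "continuous_on {t0..t1} b"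
  shows "continuous_on {t0..t1} (fst (picard_iterate t0 a b c n))"
    "continuous_on {t0..t1} (snd (picard_iterate t0 a b c n))"
  using assms by (induction n) (auto intro!: continuous_intros continuous_on_integral_Icc)

lemma picard_iterate_step_le:
  fixes a b :: "real \<Rightarrow> real" and c :: real
  assumes ca: "continuous_on {t0..t1} a" and cb: "continuous_on {t0..t1} b"
    and a: "\<forall>s\<in>{t0..t1}. \<bar>a s\<bar> \<le> L" and b: "\<forall>s\<in>{t0..t1}. \<bar>b s\<bar> \<le> L"
  shows "\<forall>p\<in>{t0..t1}.
    \<bar>fst (picard_iterate t0 a b c (Suc n)) p - fst (picard_iterate t0 a b c n) p\<bar>
      \<le> (\<bar>c\<bar> + 1) * L^n / fact n * (p - t0)^n \<and>
    \<bar>snd (picard_iterate t0 a b c (Suc n)) p - snd (picard_iterate t0 a b c n) p\<bar>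
      \<le> (\<bar>c\<bar> + 1) * L^n / fact n * (p - t0)^n"
proof (induction n)
  case (Suc n)
  define K where "K = (\<bar>c\<bar> + 1) * L^n / fact n"
  have eq: "L * K * ((p - t0)^Suc n / Suc n) = (\<bar>c\<bar> + 1) * L^Suc n / fact (Suc n) * (p - t0)^Suc n"
    for p unfolding K_def by (simp add: field_simps del: of_nat_Suc)
  note cont = continuous_on_picard_iterate[OF ca cb, where c=c]
  let ?x = "\<lambda>n. fst (picard_iterate t0 a b c n)" and ?y = "\<lambda>n. snd (picard_iterate t0 a b c n)"
  show ?case
  proof
    fix p assume p: "p \<in> {t0..t1}"
    have "\<forall>s\<in>{t0..t1}. \<bar>?y (Suc n) s - ?y n s\<bar> \<le> K * (s - t0)^n"
      "\<forall>s\<in>{t0..t1}. \<bar>?x (Suc n) s - ?x n s\<bar> \<le> K * (s - t0)^n"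
      using Suc.IH unfolding K_def by auto
    from integral_mult_diff_le[OF ca cont(2) cont(2) a this(1) p]
      integral_mult_diff_le[OF cb cont(1) cont(1) b this(2) p]
    show "\<bar>?x (Suc (Suc n)) p - ?x (Suc n) p\<bar> \<le> (\<bar>c\<bar> + 1) * L^Suc n / fact (Suc n) * (p - t0)^Suc n \<and>
      \<bar>?y (Suc (Suc n)) p - ?y (Suc n) p\<bar> \<le> (\<bar>c\<bar> + 1) * L^Suc n / fact (Suc n) * (p - t0)^Suc n"
      by (simp only: eq picard_iterate.simps fst_conv snd_conv add_diff_cancel_left)
  qed
qed simp

lemma tendsto_integral_mult_uniform_limit:
  fixes a X :: "real \<Rightarrow> real" and F :: "nat \<Rightarrow> real \<Rightarrow> real"
  assumes F: "uniform_limit {t0..t1} F X sequentially" "\<And>n. continuous_on {t0..t1} (F n)"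
    and cX: "continuous_on {t0..t1} X" and ca: "continuous_on {t0..t1} a" and p: "p \<in> {t0..t1}"
  shows "(\<lambda>n. integral {t0..p} (\<lambda>s. a s * F n s)) \<longlonglongrightarrow> integral {t0..p} (\<lambda>s. a s * X s)"
proof -
  have sub: "{t0..p} \<subseteq> {t0..t1}" using p by auto
  have bounded: "bounded (f ` {t0..p})" if "continuous_on {t0..t1} f" for f :: "real \<Rightarrow> real"
    using compact_imp_bounded[OF compact_continuous_image[OF that compact_Icc]] sub
    by (auto intro: bounded_subset)
  have "uniform_limit {t0..p} (\<lambda>n s. a s * F n s) (\<lambda>s. a s * X s) sequentially"
    by (rule uniform_lim_mult[OF uniform_limit_const uniform_limit_on_subset[OF F(1) sub]])
      (use bounded[OF ca] bounded[OF cX] in auto)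
  moreover have "continuous_on {t0..p} (\<lambda>s. a s * F n s)" for n
    using continuous_on_mult[OF ca F(2)] sub by (rule continuous_on_subset)
  ultimately obtain I J where I: "\<And>n. ((\<lambda>s. a s * F n s) has_integral I n) {t0..p}"
    and J: "((\<lambda>s. a s * X s) has_integral J) {t0..p}" and "I \<longlonglongrightarrow> J"
    by (rule uniform_limit_integral) auto
  moreover have "integral {t0..p} (\<lambda>s. a s * F n s) = I n" for n using I by (rule integral_unique)
  ultimately show ?thesis using integral_unique[OF J] by simp
qed

lemma picard_iterate_uniform_limit:
  fixes a b :: "real \<Rightarrow> real" and c :: real
  assumes ca: "continuous_on {t0..t1} a" and cb: "continuous_on {t0..t1} b"
  obtains X Y where "uniform_limit {t0..t1} (\<lambda>n. fst (picard_iterate t0 a b c n)) X sequentially"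
    "uniform_limit {t0..t1} (\<lambda>n. snd (picard_iterate t0 a b c n)) Y sequentially"
proof -
  obtain La Lb where L: "0 \<le> La" "\<forall>s\<in>{t0..t1}. \<bar>a s\<bar> \<le> La" "0 \<le> Lb" "\<forall>s\<in>{t0..t1}. \<bar>b s\<bar> \<le> Lb"
    by (metis ca cb continuous_on_Icc_abs_le)
  define L where "L = La + Lb"
  have a: "\<forall>s\<in>{t0..t1}. \<bar>a s\<bar> \<le> L" and b: "\<forall>s\<in>{t0..t1}. \<bar>b s\<bar> \<le> L"
    using L unfolding L_def by force+
  define F where "F = (\<lambda>n. fst (picard_iterate t0 a b c n))"
  define G where "G = (\<lambda>n. snd (picard_iterate t0 a b c n))"
  define M where "M k = (\<bar>c\<bar> + 1) * L^k / fact k * (t1 - t0)^k" for k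
  have "summable (\<lambda>k. (\<bar>c\<bar> + 1) * (inverse (fact k) * (L * (t1 - t0))^k))"
    by (intro summable_mult summable_exp)
  also have "(\<lambda>k. (\<bar>c\<bar> + 1) * (inverse (fact k) * (L * (t1 - t0))^k)) = M"
    unfolding M_def by (simp add: power_mult_distrib divide_inverse mult_ac)
  finally have summable: "summable M" .
  have step: "\<bar>F (Suc k) p - F k p\<bar> \<le> M k \<and> \<bar>G (Suc k) p - G k p\<bar> \<le> M k"
    if p: "p \<in> {t0..t1}" for k p
  proof -
    have "(\<bar>c\<bar> + 1) * L^k / fact k * (p - t0)^k \<le> (\<bar>c\<bar> + 1) * L^k / fact k * (t1 - t0)^k"
      using p L unfolding L_def by (intro mult_left_mono power_mono) auto
    then show ?thesis using picard_iterate_step_le[OF ca cb a b, of c k] p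
      unfolding F_def G_def M_def by (auto simp del: picard_iterate.simps intro: order_trans)
  qed
  have telescope: "(\<lambda>n p. \<Sum>i<n. H (Suc i) p - H i p) = H" if "H 0 = (\<lambda>_. 0)"
    for H :: "nat \<Rightarrow> real \<Rightarrow> real"
    by (intro ext, subst sum_lessThan_telescope) (simp add: that)
  have "F 0 = (\<lambda>_. 0)" "G 0 = (\<lambda>_. 0)" unfolding F_def G_def by simp_all
  moreover have "uniform_limit {t0..t1} (\<lambda>n p. \<Sum>i<n. F (Suc i) p - F i p) (\<lambda>p. \<Sum>i. F (Suc i) p - F i p) sequentially"
    "uniform_limit {t0..t1} (\<lambda>n p. \<Sum>i<n. G (Suc i) p - G i p) (\<lambda>p. \<Sum>i. G (Suc i) p - G i p) sequentially"
    by (rule Weierstrass_m_test[OF _ summable]; use step in force)+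
  ultimately have "uniform_limit {t0..t1} F (\<lambda>p. \<Sum>i. F (Suc i) p - F i p) sequentially"
    "uniform_limit {t0..t1} G (\<lambda>p. \<Sum>i. G (Suc i) p - G i p) sequentially"
    by (simp_all only: telescope)
  then show ?thesis unfolding F_def G_def by (rule that)
qed

lemma linear_planar_system_solvable:
  fixes a b :: "real \<Rightarrow> real" and c :: real
  assumes ca: "continuous_on {t0..t1} a" and cb: "continuous_on {t0..t1} b" and "t0 \<le> t1"
  obtains x y where "x t0 = 0" "y t0 = c"
    "\<forall>p\<in>{t0..t1}. (x has_real_derivative a p * y p) (at p within {t0..t1})"
    "\<forall>p\<in>{t0..t1}. (y has_real_derivative b p * x p) (at p within {t0..t1})"
proof -
  define F where "F n = fst (picard_iterate t0 a b c n)" for n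
  define G where "G n = snd (picard_iterate t0 a b c n)" for n
  obtain X Y where F: "uniform_limit {t0..t1} F X sequentially"
    and G: "uniform_limit {t0..t1} G Y sequentially"
    unfolding F_def[abs_def] G_def[abs_def] by (rule picard_iterate_uniform_limit[OF ca cb]) blast
  have cF: "continuous_on {t0..t1} (F n)" and cG: "continuous_on {t0..t1} (G n)" for n
    unfolding F_def G_def using continuous_on_picard_iterate[OF ca cb] by auto
  have cX: "continuous_on {t0..t1} X" by (rule uniform_limit_theorem[OF _ F]) (simp_all add: cF)
  have cY: "continuous_on {t0..t1} Y" by (rule uniform_limit_theorem[OF _ G]) (simp_all add: cG)
  have X: "X p = integral {t0..p} (\<lambda>s. a s * Y s)" and Y: "Y p = c + integral {t0..p} (\<lambda>s. b s * X s)"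
    if p: "p \<in> {t0..t1}" for p
  proof -
    have "(\<lambda>n. F (Suc n) p) \<longlonglongrightarrow> X p" "(\<lambda>n. G (Suc n) p) \<longlonglongrightarrow> Y p"
      using tendsto_uniform_limitI[OF F p] tendsto_uniform_limitI[OF G p] by (auto intro: LIMSEQ_Suc)
    moreover have "(\<lambda>n. F (Suc n) p) \<longlonglongrightarrow> integral {t0..p} (\<lambda>s. a s * Y s)"
      using tendsto_integral_mult_uniform_limit[OF G cG cY ca p] by (simp add: F_def G_def)
    moreover have "(\<lambda>n. G (Suc n) p) \<longlonglongrightarrow> c + integral {t0..p} (\<lambda>s. b s * X s)"
      using tendsto_add[OF tendsto_const tendsto_integral_mult_uniform_limit[OF F cF cX cb p]]
      by (simp add: F_def G_def)
    ultimately show "X p = integral {t0..p} (\<lambda>s. a s * Y s)" "Y p = c + integral {t0..p} (\<lambda>s. b s * X s)"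
      by (auto intro: LIMSEQ_unique)
  qed
  show ?thesis
  proof (intro that ballI)
    show "X t0 = 0" "Y t0 = c" using X Y \<open>t0 \<le> t1\<close> by auto
    fix p assume p: "p \<in> {t0..t1}"
    show "(X has_real_derivative a p * Y p) (at p within {t0..t1})"
      by (rule has_real_derivative_transform_within[OF p X integral_has_real_derivative])
        (use ca cY p in \<open>auto intro!: continuous_intros\<close>)
    have "((\<lambda>q. integral {t0..q} (\<lambda>s. b s * X s)) has_real_derivative b p * X p) (at p within {t0..t1})"
      by (rule integral_has_real_derivative) (use cb cX p in \<open>auto intro!: continuous_intros\<close>)
    then show "(Y has_real_derivative b p * X p) (at p within {t0..t1})"
      by (intro has_real_derivative_transform_within[OF p Y]) (auto intro!: derivative_eq_intros)
  qed
qed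

section \<open>The initial value problem for Phi\<close>

locale Phi_problem =
  fixes rho rhop Hp :: "real \<Rightarrow> real"
  assumes continuous_Hp: "continuous_on {-1..0} Hp"
    and continuous_rhop: "continuous_on {-1..0} rhop"
    and Hp_pos: "\<forall>x\<in>{-1..0}. Hp x > 0"
    and rho0_pos: "rho 0 > 0"
    and rhop_nonpos: "\<forall>x\<in>{-1..0}. rhop x \<le> 0"
begin

lemma Hp3_pos: "p \<in> {-1..0} \<Longrightarrow> Hp p ^ 3 > 0"
  using Hp_pos by simp

definition coeff_bound :: real where
  "coeff_bound = (SOME K. 0 \<le> K \<and> (\<forall>s\<in>{-1..0}. \<bar>Hp s ^ 3\<bar> \<le> K \<and> \<bar>rhop s\<bar> \<le> K))"

lemma coeff_bound:
  "0 \<le> coeff_bound" "\<forall>s\<in>{-1..0}. \<bar>Hp s ^ 3\<bar> \<le> coeff_bound \<and> \<bar>rhop s\<bar> \<le> coeff_bound"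
proof -
  obtain K1 K2 where "0 \<le> K1" "\<forall>s\<in>{-1..0}. \<bar>Hp s ^ 3\<bar> \<le> K1" "0 \<le> K2" "\<forall>s\<in>{-1..0}. \<bar>rhop s\<bar> \<le> K2"
    using continuous_on_Icc_abs_le[of "-1" 0 "\<lambda>s. Hp s ^ 3"] continuous_on_Icc_abs_le[OF continuous_rhop]
      continuous_Hp by (metis continuous_on_power)
  then have "\<exists>K. 0 \<le> K \<and> (\<forall>s\<in>{-1..0}. \<bar>Hp s ^ 3\<bar> \<le> K \<and> \<bar>rhop s\<bar> \<le> K)"
    by (intro exI[of _ "K1 + K2"]) force
  from someI_ex[OF this] show "0 \<le> coeff_bound"
    "\<forall>s\<in>{-1..0}. \<bar>Hp s ^ 3\<bar> \<le> coeff_bound \<and> \<bar>rhop s\<bar> \<le> coeff_bound"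
    unfolding coeff_bound_def by auto
qed

definition energy_growth :: "real \<Rightarrow> real" where
  "energy_growth mu = exp ((1 + \<bar>mu\<bar>) * coeff_bound + 1)"

lemma energy_growth_mono: "\<bar>mu\<bar> \<le> \<bar>nu\<bar> \<Longrightarrow> energy_growth mu \<le> energy_growth nu"
  unfolding energy_growth_def using coeff_bound(1) by (simp add: mult_right_mono)

lemma perturbed_system_energy_le:
  fixes x y e :: "real \<Rightarrow> real"
  assumes dx: "\<forall>q\<in>{-1..0}. (x has_real_derivative Hp q ^ 3 * y q) (at q within {-1..0})"
    and dy: "\<forall>q\<in>{-1..0}. (y has_real_derivative mu * rhop q * x q + e q) (at q within {-1..0})"
    and e: "\<forall>q\<in>{-1..0}. \<bar>e q\<bar> \<le> E" and p: "p \<in> {-1..0}"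
  shows "(x p)\<^sup>2 + (y p)\<^sup>2 \<le> ((x (-1))\<^sup>2 + (y (-1))\<^sup>2 + E\<^sup>2) * (energy_growth mu)\<^sup>2"
proof -
  define L where "L = (1 + \<bar>mu\<bar>) * coeff_bound"
  have E: "0 \<le> E" using e by force
  have K: "0 \<le> coeff_bound" "coeff_bound \<le> L" "\<bar>mu\<bar> * coeff_bound \<le> L"
    using coeff_bound(1) unfolding L_def by (simp_all add: algebra_simps)
  then have L: "0 \<le> L" by linarith
  have bx: "\<forall>q\<in>{-1..0}. \<bar>Hp q ^ 3 * y q\<bar> \<le> L * \<bar>y q\<bar> + E"
  proof
    fix q :: real assume "q \<in> {-1..0}"
    then have "\<bar>Hp q ^ 3\<bar> \<le> L" using coeff_bound(2) K(2) by force
    then have "\<bar>Hp q ^ 3\<bar> * \<bar>y q\<bar> \<le> L * \<bar>y q\<bar>" by (simp add: mult_right_mono)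
    then show "\<bar>Hp q ^ 3 * y q\<bar> \<le> L * \<bar>y q\<bar> + E" using E by (simp add: abs_mult)
  qed
  have by': "\<forall>q\<in>{-1..0}. \<bar>mu * rhop q * x q + e q\<bar> \<le> L * \<bar>x q\<bar> + E"
  proof
    fix q :: real assume q: "q \<in> {-1..0}"
    then have "\<bar>mu\<bar> * \<bar>rhop q\<bar> \<le> \<bar>mu\<bar> * coeff_bound" using coeff_bound(2) by (simp add: mult_left_mono)
    then have "\<bar>mu * rhop q\<bar> \<le> L" using K(3) by (simp add: abs_mult)
    then have "\<bar>mu * rhop q * x q\<bar> \<le> L * \<bar>x q\<bar>" by (simp add: abs_mult mult_right_mono)
    then show "\<bar>mu * rhop q * x q + e q\<bar> \<le> L * \<bar>x q\<bar> + E"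
      using e q abs_triangle_ineq[of "mu * rhop q * x q" "e q"] by force
  qed
  have "(x p)\<^sup>2 + (y p)\<^sup>2 + E\<^sup>2 \<le> ((x (-1))\<^sup>2 + (y (-1))\<^sup>2 + E\<^sup>2) * exp ((2*L + 2) * (p - -1))"
    by (rule planar_energy_gronwall[OF dx dy bx by' L E p])
  also have "\<dots> \<le> ((x (-1))\<^sup>2 + (y (-1))\<^sup>2 + E\<^sup>2) * exp (2*L + 2)"
    using p L by (intro mult_left_mono) (auto intro: mult_left_le)
  also have "exp (2*L + 2) = (energy_growth mu)\<^sup>2"
    unfolding energy_growth_def L_def power2_eq_square by (simp flip: exp_add)
  finally show ?thesis using zero_le_power2[of E] by linarith
qed

lemma is_Phi_unique:
  assumes P: "is_Phi Hp rhop mu P P'" and Q: "is_Phi Hp rhop mu Q Q'" and p: "p \<in> {-1..0}"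
  shows "P p = Q p \<and> P' p = Q' p"
proof -
  define x where "x q = P q - Q q" for q
  define y where "y q = P' q / Hp q ^ 3 - Q' q / Hp q ^ 3" for q
  have "\<forall>q\<in>{-1..0}. (x has_real_derivative Hp q ^ 3 * y q) (at q within {-1..0})"
  proof
    fix q :: real assume q: "q \<in> {-1..0}"
    have "((\<lambda>q. P q - Q q) has_real_derivative P' q - Q' q) (at q within {-1..0})"
      using P Q q unfolding is_Phi_def by (intro DERIV_diff) auto
    moreover have "P' q - Q' q = Hp q ^ 3 * y q" using Hp3_pos[OF q] unfolding y_def by (simp add: field_simps)
    ultimately show "(x has_real_derivative Hp q ^ 3 * y q) (at q within {-1..0})"
      unfolding x_def by simp
  qed
  moreover have "\<forall>q\<in>{-1..0}. (y has_real_derivative mu * rhop q * x q + 0) (at q within {-1..0})"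
  proof
    fix q :: real assume q: "q \<in> {-1..0}"
    have "((\<lambda>q. P' q / Hp q ^ 3 - Q' q / Hp q ^ 3) has_real_derivative
        mu * rhop q * P q - mu * rhop q * Q q) (at q within {-1..0})"
      using P Q q unfolding is_Phi_def by (intro DERIV_diff) auto
    then show "(y has_real_derivative mu * rhop q * x q + 0) (at q within {-1..0})"
      unfolding x_def y_def by (simp add: algebra_simps)
  qed
  ultimately have "(x p)\<^sup>2 + (y p)\<^sup>2 \<le> ((x (-1))\<^sup>2 + (y (-1))\<^sup>2 + 0\<^sup>2) * (energy_growth mu)\<^sup>2"
    by (rule perturbed_system_energy_le) (use p in auto)
  moreover have "x (-1) = 0" "y (-1) = 0" using P Q unfolding is_Phi_def x_def y_def by auto
  ultimately have "x p = 0" "y p = 0" by (simp_all add: sum_power2_le_zero_iff)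
  then show ?thesis using Hp3_pos[OF p] unfolding x_def y_def by (simp add: field_simps)
qed

lemma is_Phi_exists:
  obtains P P' where "is_Phi Hp rhop mu P P'" "\<forall>x. x \<notin> {-1..0} \<longrightarrow> P x = 0 \<and> P' x = 0"
proof -
  obtain X Y where XY: "X (-1) = 0" "Y (-1) = 1 / Hp (-1) ^ 3"
     "\<forall>p\<in>{-1..0}. (X has_real_derivative Hp p ^ 3 * Y p) (at p within {-1..0})"
     "\<forall>p\<in>{-1..0}. (Y has_real_derivative mu * rhop p * X p) (at p within {-1..0})"
    by (rule linear_planar_system_solvable[of "-1" 0 "\<lambda>s. Hp s ^ 3" "\<lambda>s. mu * rhop s"])
      (use continuous_Hp continuous_rhop in \<open>auto intro!: continuous_intros\<close>)
  define P where "P p = (if p \<in> {-1..0} then X p else 0)" for p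
  define P' where "P' p = (if p \<in> {-1..0} then Hp p ^ 3 * Y p else 0)" for p
  have "is_Phi Hp rhop mu P P'"
    unfolding is_Phi_def
  proof (intro conjI ballI)
    show "P (-1) = 0" "P' (-1) = 1" using XY Hp3_pos[of "-1"] unfolding P_def P'_def by simp_all
    fix x :: real assume x: "x \<in> {-1..0}"
    show "(P has_real_derivative P' x) (at x within {-1..0})"
    proof (rule has_real_derivative_transform_within[OF x])
      show "P y = X y" if "y \<in> {-1..0}" for y using that by (simp add: P_def)
      show "(X has_real_derivative P' x) (at x within {-1..0})" using XY(3) x by (simp add: P'_def)
    qed
    show "((\<lambda>p. P' p / Hp p ^ 3) has_real_derivative mu * rhop x * P x) (at x within {-1..0})"
    proof (rule has_real_derivative_transform_within[OF x])
      show "P' y / Hp y ^ 3 = Y y" if "y \<in> {-1..0}" for y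
        using that Hp3_pos[OF that] by (simp add: P'_def)
      show "(Y has_real_derivative mu * rhop x * P x) (at x within {-1..0})" using XY(4) x by (simp add: P_def)
    qed
  qed
  moreover have "\<forall>x. x \<notin> {-1..0} \<longrightarrow> P x = 0 \<and> P' x = 0" unfolding P_def P'_def by auto
  ultimately show ?thesis by (rule that)
qed

lemma is_Phi_Phi: "is_Phi Hp rhop mu (Phi Hp rhop mu) (Phi_p Hp rhop mu)"
proof -
  let ?Q = "\<lambda>(P, P'). is_Phi Hp rhop mu P P' \<and> (\<forall>x. x \<notin> {-1..0} \<longrightarrow> P x = 0 \<and> P' x = 0)"
  obtain P P' where "is_Phi Hp rhop mu P P'" "\<forall>x. x \<notin> {-1..0} \<longrightarrow> P x = 0 \<and> P' x = 0"
    by (rule is_Phi_exists)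
  then have PP: "?Q (P, P')" by simp
  have "z = (P, P')" if "?Q z" for z
  proof (cases z)
    case (Pair Q Q')
    with that PP is_Phi_unique[of mu Q Q' P P'] have "Q x = P x \<and> Q' x = P' x" for x
      by (cases "x \<in> {-1..0}") auto
    then show ?thesis using Pair by auto
  qed
  with PP have "?Q (Phi_pair Hp rhop mu)" unfolding Phi_pair_def by (intro theI[of ?Q]) auto
  then show ?thesis unfolding Phi_def Phi_p_def by (simp add: case_prod_beta)
qed

abbreviation phi :: "real \<Rightarrow> real \<Rightarrow> real" where "phi \<equiv> Phi Hp rhop"
abbreviation A :: "real \<Rightarrow> real" where "A \<equiv> A_fun Hp rho rhop"

definition flux :: "real \<Rightarrow> real \<Rightarrow> real" where
  "flux mu p = Phi_p Hp rhop mu p / Hp p ^ 3"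

lemma Phi_has_derivative:
  "p \<in> {-1..0} \<Longrightarrow> (phi mu has_real_derivative Hp p ^ 3 * flux mu p) (at p within {-1..0})"
  using is_Phi_Phi[of mu] Hp3_pos[of p] unfolding is_Phi_def flux_def by simp

lemma flux_has_derivative:
  "p \<in> {-1..0} \<Longrightarrow> (flux mu has_real_derivative mu * rhop p * phi mu p) (at p within {-1..0})"
  using is_Phi_Phi[of mu] unfolding is_Phi_def flux_def[abs_def] by blast

lemma Phi_initial: "phi mu (-1) = 0"
  and flux_initial: "flux mu (-1) = 1 / Hp (-1) ^ 3"
  using is_Phi_Phi[of mu] unfolding is_Phi_def flux_def by auto

lemma A_fun_eq: "A mu = - flux mu 0 + mu * rho 0 * phi mu 0"
  unfolding A_fun_def flux_def by simp

lemma energy_growth_pos: "0 < energy_growth mu"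
  unfolding energy_growth_def by simp

lemma Phi_flux_bounded:
  assumes mu: "\<bar>mu\<bar> \<le> M" and p: "p \<in> {-1..0}"
  shows "\<bar>phi mu p\<bar> \<le> energy_growth M / Hp (-1) ^ 3" "\<bar>flux mu p\<bar> \<le> energy_growth M / Hp (-1) ^ 3"
proof -
  have "(phi mu p)\<^sup>2 + (flux mu p)\<^sup>2
      \<le> ((phi mu (-1))\<^sup>2 + (flux mu (-1))\<^sup>2 + 0\<^sup>2) * (energy_growth mu)\<^sup>2"
    using Phi_has_derivative flux_has_derivative p by (intro perturbed_system_energy_le) auto
  also have "\<dots> = (energy_growth mu / Hp (-1) ^ 3)\<^sup>2"
    unfolding Phi_initial flux_initial by (simp add: power_divide)
  also have "\<dots> \<le> (energy_growth M / Hp (-1) ^ 3)\<^sup>2"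
    using energy_growth_mono[of mu M] mu Hp3_pos[of "-1"] energy_growth_pos[of mu]
    by (intro power_mono divide_right_mono) auto
  finally show "\<bar>phi mu p\<bar> \<le> energy_growth M / Hp (-1) ^ 3" "\<bar>flux mu p\<bar> \<le> energy_growth M / Hp (-1) ^ 3"
    using abs_le_of_sum_squares_le Hp3_pos[of "-1"] energy_growth_pos[of M] by auto
qed

lemma Phi_flux_lipschitz:
  assumes mu: "\<bar>mu\<bar> \<le> M" and nu: "\<bar>nu\<bar> \<le> M" and p: "p \<in> {-1..0}"
  shows "\<bar>phi mu p - phi nu p\<bar> \<le> coeff_bound * (energy_growth M)\<^sup>2 / Hp (-1) ^ 3 * \<bar>mu - nu\<bar>"
    "\<bar>flux mu p - flux nu p\<bar> \<le> coeff_bound * (energy_growth M)\<^sup>2 / Hp (-1) ^ 3 * \<bar>mu - nu\<bar>"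
proof -
  define x where "x q = phi mu q - phi nu q" for q
  define y where "y q = flux mu q - flux nu q" for q
  define E where "E = \<bar>mu - nu\<bar> * coeff_bound * (energy_growth M / Hp (-1) ^ 3)"
  have E: "0 \<le> E" unfolding E_def using coeff_bound(1) energy_growth_pos[of M] Hp3_pos[of "-1"] by simp
  have "\<forall>q\<in>{-1..0}. (x has_real_derivative Hp q ^ 3 * y q) (at q within {-1..0})"
    unfolding x_def[abs_def] y_def
    by (auto intro!: derivative_eq_intros Phi_has_derivative simp: algebra_simps)
  moreover have "\<forall>q\<in>{-1..0}. (y has_real_derivative mu * rhop q * x q + (mu - nu) * rhop q * phi nu q)
      (at q within {-1..0})"
    unfolding x_def y_def[abs_def]
    by (auto intro!: derivative_eq_intros flux_has_derivative simp: algebra_simps)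
  moreover have "\<forall>q\<in>{-1..0}. \<bar>(mu - nu) * rhop q * phi nu q\<bar> \<le> E"
  proof
    fix q :: real assume q: "q \<in> {-1..0}"
    have "\<bar>rhop q\<bar> * \<bar>phi nu q\<bar> \<le> coeff_bound * (energy_growth M / Hp (-1) ^ 3)"
      using coeff_bound q Phi_flux_bounded(1)[OF nu q] by (intro mult_mono) auto
    from mult_left_mono[OF this abs_ge_zero[of "mu - nu"]]
    show "\<bar>(mu - nu) * rhop q * phi nu q\<bar> \<le> E" unfolding E_def by (simp add: abs_mult mult.assoc)
  qed
  ultimately have "(x p)\<^sup>2 + (y p)\<^sup>2 \<le> ((x (-1))\<^sup>2 + (y (-1))\<^sup>2 + E\<^sup>2) * (energy_growth mu)\<^sup>2"
    by (rule perturbed_system_energy_le[OF _ _ _ p])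
  also have "\<dots> = (E * energy_growth mu)\<^sup>2"
    unfolding x_def y_def Phi_initial flux_initial by (simp add: power_mult_distrib)
  also have "\<dots> \<le> (E * energy_growth M)\<^sup>2"
    using energy_growth_mono[of mu M] mu energy_growth_pos[of mu] E by (intro power_mono mult_left_mono) auto
  also have "E * energy_growth M = coeff_bound * (energy_growth M)\<^sup>2 / Hp (-1) ^ 3 * \<bar>mu - nu\<bar>"
    unfolding E_def by (simp add: power2_eq_square)
  finally show "\<bar>phi mu p - phi nu p\<bar> \<le> coeff_bound * (energy_growth M)\<^sup>2 / Hp (-1) ^ 3 * \<bar>mu - nu\<bar>"
    "\<bar>flux mu p - flux nu p\<bar> \<le> coeff_bound * (energy_growth M)\<^sup>2 / Hp (-1) ^ 3 * \<bar>mu - nu\<bar>"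
    using abs_le_of_sum_squares_le coeff_bound(1) Hp3_pos[of "-1"] energy_growth_pos[of M]
    unfolding x_def y_def by auto
qed

lemma flux_A_fun_lipschitz:
  obtains C where "0 \<le> C"
    "\<And>mu nu p. \<bar>mu\<bar> \<le> M \<Longrightarrow> \<bar>nu\<bar> \<le> M \<Longrightarrow> p \<in> {-1..0} \<Longrightarrow> \<bar>flux mu p - flux nu p\<bar> \<le> C * \<bar>mu - nu\<bar>"
    "\<And>mu nu. \<bar>mu\<bar> \<le> M \<Longrightarrow> \<bar>nu\<bar> \<le> M \<Longrightarrow> \<bar>A mu - A nu\<bar> \<le> C * \<bar>mu - nu\<bar>"
proof -
  define CL where "CL = coeff_bound * (energy_growth M)\<^sup>2 / Hp (-1) ^ 3"
  define B where "B = energy_growth M / Hp (-1) ^ 3"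
  have CL: "0 \<le> CL" and B: "0 \<le> B"
    unfolding CL_def B_def using coeff_bound(1) energy_growth_pos[of M] Hp3_pos[of "-1"] by auto
  define C where "C = CL + rho 0 * (\<bar>M\<bar> * CL + B)"
  have C: "0 \<le> C" "CL \<le> C" unfolding C_def using CL B rho0_pos by auto
  show ?thesis
  proof (rule that[OF C(1)])
    fix mu nu p :: real assume mu: "\<bar>mu\<bar> \<le> M" and nu: "\<bar>nu\<bar> \<le> M" and p: "p \<in> {-1..0}"
    show "\<bar>flux mu p - flux nu p\<bar> \<le> C * \<bar>mu - nu\<bar>"
      using Phi_flux_lipschitz(2)[OF mu nu p] mult_right_mono[OF C(2) abs_ge_zero[of "mu - nu"]]
      unfolding CL_def by linarith
  next
    fix mu nu assume mu: "\<bar>mu\<bar> \<le> M" and nu: "\<bar>nu\<bar> \<le> M"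
    have p0: "(0::real) \<in> {-1..0}" by simp
    have "\<bar>mu * (phi mu 0 - phi nu 0) + (mu - nu) * phi nu 0\<bar>
        \<le> \<bar>mu\<bar> * \<bar>phi mu 0 - phi nu 0\<bar> + \<bar>mu - nu\<bar> * \<bar>phi nu 0\<bar>"
      by (rule order_trans[OF abs_triangle_ineq]) (simp add: abs_mult)
    also have "\<dots> \<le> \<bar>M\<bar> * (CL * \<bar>mu - nu\<bar>) + \<bar>mu - nu\<bar> * B"
      using Phi_flux_lipschitz(1)[OF mu nu p0] Phi_flux_bounded(1)[OF nu p0] mu
      unfolding CL_def B_def by (intro add_mono mult_mono) auto
    finally have phi: "\<bar>mu * (phi mu 0 - phi nu 0) + (mu - nu) * phi nu 0\<bar> \<le> (\<bar>M\<bar> * CL + B) * \<bar>mu - nu\<bar>"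
      by (simp add: algebra_simps)
    have "A mu - A nu = - (flux mu 0 - flux nu 0) + rho 0 * (mu * (phi mu 0 - phi nu 0) + (mu - nu) * phi nu 0)"
      unfolding A_fun_eq by (simp add: algebra_simps)
    then have "\<bar>A mu - A nu\<bar> \<le> \<bar>- (flux mu 0 - flux nu 0)\<bar> + \<bar>rho 0 * (mu * (phi mu 0 - phi nu 0) + (mu - nu) * phi nu 0)\<bar>"
      by (simp only: abs_triangle_ineq)
    also have "\<dots> = \<bar>flux mu 0 - flux nu 0\<bar> + rho 0 * \<bar>mu * (phi mu 0 - phi nu 0) + (mu - nu) * phi nu 0\<bar>"
      using rho0_pos by (simp add: abs_mult)
    also have "\<dots> \<le> CL * \<bar>mu - nu\<bar> + rho 0 * ((\<bar>M\<bar> * CL + B) * \<bar>mu - nu\<bar>)"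
      using Phi_flux_lipschitz(2)[OF mu nu p0] phi rho0_pos unfolding CL_def
      by (intro add_mono mult_left_mono) auto
    finally show "\<bar>A mu - A nu\<bar> \<le> C * \<bar>mu - nu\<bar>" unfolding C_def by (simp add: algebra_simps)
  qed
qed

lemma Phi_mono_if_flux_nonneg:
  assumes "\<forall>p\<in>{-1..0}. 0 \<le> flux mu p" and "-1 \<le> s" "s \<le> t" "t \<le> 0"
  shows "phi mu s \<le> phi mu t"
proof (rule DERIV_within_nonneg_imp_increasing[where a="-1" and b=0 and f="phi mu" and f'="\<lambda>p. Hp p ^ 3 * flux mu p"])
  show "\<forall>x\<in>{-1..0}. (phi mu has_real_derivative Hp x ^ 3 * flux mu x) (at x within {-1..0})"
    using Phi_has_derivative by blast
  show "\<forall>x\<in>{-1..0}. 0 \<le> Hp x ^ 3 * flux mu x" using assms(1) Hp3_pos by (simp add: less_imp_le)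
qed (use assms in auto)

lemma Phi_nonneg_if_flux_nonneg:
  assumes "\<forall>p\<in>{-1..0}. 0 \<le> flux mu p" and "p \<in> {-1..0}"
  shows "0 \<le> phi mu p"
  using Phi_mono_if_flux_nonneg[of mu "-1" p] assms Phi_initial by auto

lemma flux_antimono_if_flux_nonneg:
  assumes "0 \<le> mu" and "\<forall>p\<in>{-1..0}. 0 \<le> flux mu p" and "-1 \<le> s" "s \<le> t" "t \<le> 0"
  shows "flux mu t \<le> flux mu s"
proof (rule DERIV_within_nonpos_imp_decreasing[where a="-1" and b=0 and f="flux mu" and f'="\<lambda>p. mu * rhop p * phi mu p"])
  show "\<forall>p\<in>{-1..0}. (flux mu has_real_derivative mu * rhop p * phi mu p) (at p within {-1..0})"
    using flux_has_derivative by blast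
  show "\<forall>p\<in>{-1..0}. mu * rhop p * phi mu p \<le> 0"
    using assms(1) rhop_nonpos Phi_nonneg_if_flux_nonneg[OF assms(2)]
    by (metis mult_nonneg_nonpos mult_nonpos_nonneg)
qed (use assms in auto)

lemma Phi_pos_if_flux_pos:
  assumes "\<forall>p\<in>{-1..0}. 0 < flux mu p" and "p \<in> {-1<..0}"
  shows "0 < phi mu p"
  using DERIV_within_pos_imp_strict_increasing[of "-1" 0 "phi mu" "\<lambda>p. Hp p ^ 3 * flux mu p" "-1" p]
    assms Hp3_pos Phi_has_derivative Phi_initial by auto

lemma flux_constant_if_Phi_zero:
  assumes "\<forall>p\<in>{-1..0}. mu * phi mu p = 0" and "p \<in> {-1..0}"
  shows "flux mu p = 1 / Hp (-1) ^ 3"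
proof -
  have "\<forall>x\<in>{-1..0}. (flux mu has_real_derivative 0) (at x within {-1..0})"
  proof
    fix x :: real assume x: "x \<in> {-1..0}"
    have "mu * rhop x * phi mu x = 0" using assms(1) x by (metis mult.commute mult.left_commute mult_zero_right)
    then show "(flux mu has_real_derivative 0) (at x within {-1..0})"
      using flux_has_derivative[OF x, of mu] by (simp only:)
  qed
  then show ?thesis using DERIV_within_zero_imp_constant[where a="-1" and b=0] assms(2) flux_initial by metis
qed

lemma A_fun_zero_neg: "A 0 < 0"
  using flux_constant_if_Phi_zero[of 0 0] Hp3_pos[of "-1"] by (simp add: A_fun_eq)

text \<open>The flux is nonnegative and nonincreasing, so its zero propagates to p = 0, while
  phi mu 0 > 0.\<close>
lemma A_fun_pos_if_flux_vanishes:
  assumes mu: "0 < mu" and nonneg: "\<forall>p\<in>{-1..0}. 0 \<le> flux mu p"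
    and p0: "p0 \<in> {-1..0}" "flux mu p0 = 0"
  shows "0 < A mu"
proof -
  have "flux mu 0 \<le> flux mu p0" using flux_antimono_if_flux_nonneg[of mu p0 0] mu nonneg p0 by auto
  moreover have "0 \<le> flux mu 0" using nonneg by simp
  ultimately have flux0: "flux mu 0 = 0" using p0(2) by linarith
  have "phi mu 0 \<noteq> 0"
  proof
    assume "phi mu 0 = 0"
    then have "phi mu p = 0" if "p \<in> {-1..0}" for p
      using Phi_mono_if_flux_nonneg[OF nonneg, of p 0] Phi_nonneg_if_flux_nonneg[OF nonneg that] that by auto
    then have "\<forall>p\<in>{-1..0}. mu * phi mu p = 0" by simp
    then show False using flux_constant_if_Phi_zero[OF _ p0(1)] p0(2) Hp3_pos[of "-1"] by simp
  qed
  then have "0 < phi mu 0" using Phi_nonneg_if_flux_nonneg[OF nonneg, of 0] by simp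
  then show ?thesis unfolding A_fun_eq using flux0 mu rho0_pos by simp
qed

lemma Hp3_lower_bound:
  obtains m where "0 < m" "\<forall>p\<in>{-1..0}. m \<le> Hp p ^ 3"
proof -
  have "continuous_on {-1..0} (\<lambda>p. Hp p ^ 3)" using continuous_Hp by (intro continuous_intros)
  moreover have "{-1..0::real} \<noteq> {}" by simp
  ultimately obtain q where "q \<in> {-1..0}" "\<forall>p\<in>{-1..0}. Hp q ^ 3 \<le> Hp p ^ 3"
    using continuous_attains_inf[OF compact_Icc] by blast
  then show ?thesis using Hp3_pos that by blast
qed

text \<open>As the flux decreases, phi mu 0 \<ge> m * flux mu 0; so A mu \<le> 0 would force
  mu * m * rho 0 \<le> 1.\<close>
lemma A_fun_pos_if_mu_large:
  assumes mu: "0 \<le> mu" and pos: "\<forall>p\<in>{-1..0}. 0 < flux mu p"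
    and m: "0 < m" "\<forall>p\<in>{-1..0}. m \<le> Hp p ^ 3" and large: "1 < mu * m * rho 0"
  shows "0 < A mu"
proof (rule ccontr)
  assume "\<not> 0 < A mu"
  then have A: "mu * rho 0 * phi mu 0 \<le> flux mu 0" unfolding A_fun_eq by simp
  have nonneg: "\<forall>p\<in>{-1..0}. 0 \<le> flux mu p" using pos by (simp add: less_imp_le)
  define g where "g p = phi mu p - m * flux mu 0 * p" for p
  have "g (-1) \<le> g 0"
  proof (rule DERIV_within_nonneg_imp_increasing
      [where a="-1" and b=0 and f=g and f'="\<lambda>p. Hp p ^ 3 * flux mu p - m * flux mu 0"])
    show "\<forall>x\<in>{-1..0}. (g has_real_derivative Hp x ^ 3 * flux mu x - m * flux mu 0) (at x within {-1..0})"
      unfolding g_def[abs_def] by (auto intro!: derivative_eq_intros Phi_has_derivative)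
    show "\<forall>x\<in>{-1..0}. 0 \<le> Hp x ^ 3 * flux mu x - m * flux mu 0"
    proof
      fix x :: real assume x: "x \<in> {-1..0}"
      have "m * flux mu 0 \<le> m * flux mu x"
        using flux_antimono_if_flux_nonneg[OF mu nonneg, of x 0] x m by (intro mult_left_mono) auto
      also have "\<dots> \<le> Hp x ^ 3 * flux mu x" using m(2) x nonneg by (intro mult_right_mono) auto
      finally show "0 \<le> Hp x ^ 3 * flux mu x - m * flux mu 0" by simp
    qed
  qed auto
  then have "m * flux mu 0 \<le> phi mu 0" unfolding g_def using Phi_initial by simp
  moreover have "m * (mu * rho 0 * phi mu 0) \<le> m * flux mu 0" using A m by (intro mult_left_mono) auto
  ultimately have "(mu * m * rho 0) * phi mu 0 \<le> 1 * phi mu 0" by (simp add: algebra_simps)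
  moreover have "1 * phi mu 0 < (mu * m * rho 0) * phi mu 0"
    using large Phi_pos_if_flux_pos[OF pos, of 0] by (intro mult_strict_right_mono) auto
  ultimately show False by simp
qed

section \<open>The critical parameter\<close>

definition admissible :: "real \<Rightarrow> bool" where
  "admissible mu \<longleftrightarrow> (\<forall>p\<in>{-1..0}. 0 < flux mu p) \<and> A mu < 0"

lemma admissible_zero: "admissible 0"
  unfolding admissible_def using flux_constant_if_Phi_zero[of 0] Hp3_pos[of "-1"] A_fun_zero_neg by simp

lemma admissible_open:
  assumes adm: "admissible mu" and mu: "0 \<le> mu" "mu \<le> M"
  obtains d where "0 < d" "\<And>nu. 0 \<le> nu \<Longrightarrow> nu \<le> M \<Longrightarrow> \<bar>nu - mu\<bar> < d \<Longrightarrow> admissible nu"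
proof -
  have "continuous_on {-1..0} (flux mu)" using flux_has_derivative by (intro DERIV_continuous_on) auto
  moreover have "{-1..0::real} \<noteq> {}" by simp
  ultimately obtain q where q: "q \<in> {-1..0}" "\<forall>p\<in>{-1..0}. flux mu q \<le> flux mu p"
    using continuous_attains_inf[OF compact_Icc] by blast
  define gap where "gap = min (flux mu q) (- A mu)"
  have gap: "0 < gap" "\<forall>p\<in>{-1..0}. gap \<le> flux mu p" "gap \<le> - A mu"
    using adm q unfolding admissible_def gap_def by force+
  obtain C where C: "0 \<le> C"
    "\<And>mu nu p. \<bar>mu\<bar> \<le> M \<Longrightarrow> \<bar>nu\<bar> \<le> M \<Longrightarrow> p \<in> {-1..0} \<Longrightarrow> \<bar>flux mu p - flux nu p\<bar> \<le> C * \<bar>mu - nu\<bar>"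
    "\<And>mu nu. \<bar>mu\<bar> \<le> M \<Longrightarrow> \<bar>nu\<bar> \<le> M \<Longrightarrow> \<bar>A mu - A nu\<bar> \<le> C * \<bar>mu - nu\<bar>"
    by (rule flux_A_fun_lipschitz[where M=M]) blast
  show ?thesis
  proof (rule that[of "gap / (C + 1)"])
    show "0 < gap / (C + 1)" using gap C by simp
    fix nu assume nu: "0 \<le> nu" "nu \<le> M" "\<bar>nu - mu\<bar> < gap / (C + 1)"
    have close: "C * \<bar>nu - mu\<bar> < gap"
    proof -
      have "C * \<bar>nu - mu\<bar> \<le> (C + 1) * \<bar>nu - mu\<bar>" by (simp add: algebra_simps)
      also have "\<dots> < gap" using nu(3) C by (simp add: field_simps)
      finally show ?thesis .
    qed
    have "0 < flux nu p" if p: "p \<in> {-1..0}" for p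
      using C(2)[of nu mu p] nu mu p close gap(2) by force
    moreover have "A nu < 0" using C(3)[of nu mu] nu mu close gap(3) by force
    ultimately show "admissible nu" unfolding admissible_def by blast
  qed
qed

lemma inadmissible_exists: "\<exists>M\<ge>0. \<not> admissible M"
proof -
  obtain m where m: "0 < m" "\<forall>p\<in>{-1..0}. m \<le> Hp p ^ 3" by (rule Hp3_lower_bound)
  define M where "M = 2 / (m * rho 0)"
  have "1 < M * m * rho 0" using m rho0_pos unfolding M_def by simp
  moreover have M: "0 \<le> M" using m rho0_pos unfolding M_def by simp
  ultimately have "\<not> admissible M" using A_fun_pos_if_mu_large[OF M _ m] unfolding admissible_def by force
  with M show ?thesis by blast
qed

lemma first_inadmissible:
  obtains m where "0 < m" "\<not> admissible m" "\<And>mu. 0 \<le> mu \<Longrightarrow> mu < m \<Longrightarrow> admissible mu"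
proof -
  obtain M where M: "0 \<le> M" "\<not> admissible M" using inadmissible_exists by blast
  define B where "B = {mu. 0 \<le> mu \<and> mu \<le> M \<and> \<not> admissible mu}"
  define m where "m = Inf B"
  have MB: "M \<in> B" and bdd: "bdd_below B" unfolding B_def using M by (auto intro: bdd_belowI[of _ 0])
  have m: "0 \<le> m" "m \<le> M" unfolding m_def using MB bdd by (auto intro: cInf_greatest cInf_lower simp: B_def)
  have below: "admissible mu" if "0 \<le> mu" "mu < m" for mu
    using cInf_lower[OF _ bdd, of mu] that m unfolding B_def m_def by fastforce
  have "\<not> admissible m"
  proof
    assume "admissible m"
    then obtain d where d: "0 < d" "\<And>nu. 0 \<le> nu \<Longrightarrow> nu \<le> M \<Longrightarrow> \<bar>nu - m\<bar> < d \<Longrightarrow> admissible nu"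
      using admissible_open m by blast
    have "m + d \<le> m" unfolding m_def
    proof (rule cInf_greatest)
      show "B \<noteq> {}" using MB by auto
      fix b assume b: "b \<in> B"
      then have "m \<le> b" unfolding m_def by (rule cInf_lower[OF _ bdd])
      moreover have "\<not> \<bar>b - m\<bar> < d" using d(2)[of b] b unfolding B_def by auto
      ultimately show "Inf B + d \<le> b" unfolding m_def by linarith
    qed
    then show False using d by simp
  qed
  moreover have "0 < m" using \<open>\<not> admissible m\<close> admissible_zero m by (cases "m = 0") auto
  ultimately show ?thesis using below that by blast
qed

lemma critical_mu_exists:
  obtains m where "0 < m" "\<forall>p\<in>{-1..0}. 0 < flux m p" "A m = 0"
    "\<And>mu. 0 \<le> mu \<Longrightarrow> mu < m \<Longrightarrow> admissible mu"
proof -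
  obtain m where m: "0 < m" "\<not> admissible m" and below: "\<And>mu. 0 \<le> mu \<Longrightarrow> mu < m \<Longrightarrow> admissible mu"
    by (rule first_inadmissible) blast
  obtain C where C: "0 \<le> C"
    "\<And>mu nu p. \<bar>mu\<bar> \<le> m \<Longrightarrow> \<bar>nu\<bar> \<le> m \<Longrightarrow> p \<in> {-1..0} \<Longrightarrow> \<bar>flux mu p - flux nu p\<bar> \<le> C * \<bar>mu - nu\<bar>"
    "\<And>mu nu. \<bar>mu\<bar> \<le> m \<Longrightarrow> \<bar>nu\<bar> \<le> m \<Longrightarrow> \<bar>A mu - A nu\<bar> \<le> C * \<bar>mu - nu\<bar>"
    by (rule flux_A_fun_lipschitz[where M=m]) blast
  have flux_nonneg: "\<forall>p\<in>{-1..0}. 0 \<le> flux m p"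
  proof
    fix p :: real assume p: "p \<in> {-1..0}"
    show "0 \<le> flux m p"
      using below C(2)[of m _ p] m(1) p
      by (intro nonneg_if_pos_before_and_lipschitz[OF m(1) C(1)]) (auto simp: admissible_def)
  qed
  have "0 \<le> - A m"
  proof (rule nonneg_if_pos_before_and_lipschitz[OF m(1) C(1)])
    fix nu assume nu: "0 \<le> nu" "nu < m"
    then show "0 < - A nu \<and> \<bar>- A m - - A nu\<bar> \<le> C * \<bar>m - nu\<bar>"
      using below[OF nu] C(3)[of m nu] abs_minus_commute[of "A nu" "A m"] m(1)
      unfolding admissible_def by simp
  qed
  then have flux_pos: "\<forall>p\<in>{-1..0}. 0 < flux m p"
    using A_fun_pos_if_flux_vanishes[OF m(1) flux_nonneg] flux_nonneg by force
  then have "A m = 0" using m(2) \<open>0 \<le> - A m\<close> unfolding admissible_def by simp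
  with m(1) flux_pos below show ?thesis using that by blast
qed

lemma is_bvp_sol_Phi_iff: "is_bvp_sol Hp rho rhop mu (phi mu) (Phi_p Hp rhop mu) \<longleftrightarrow> A mu = 0"
  using is_Phi_Phi[of mu] unfolding is_bvp_sol_def is_Phi_def A_fun_def by blast

lemma Phi_p_pos_if_flux_pos:
  assumes "\<forall>p\<in>{-1..0}. 0 < flux mu p" and "p \<in> {-1..0}"
  shows "0 < Phi_p Hp rhop mu p"
proof -
  have "Phi_p Hp rhop mu p = flux mu p * Hp p ^ 3" using Hp3_pos[OF assms(2)] unfolding flux_def by simp
  then show ?thesis using assms Hp3_pos[OF assms(2)] by simp
qed

end

lemma C_k_alpha_derivative_continuous:
  assumes C: "C_k_alpha k a {l..u} f" and k: "1 < k" and lu: "l < u"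
    and deriv: "\<forall>x\<in>{l..u}. (f has_real_derivative f' x) (at x within {l..u})"
  shows "continuous_on {l..u} f'"
proof -
  obtain D where D0: "\<forall>x\<in>{l..u}. D 0 x = f x"
    and D: "\<forall>i<k. \<forall>x\<in>{l..u}. (D i has_real_derivative D (Suc i) x) (at x within {l..u})"
    using C unfolding C_k_alpha_def by blast
  have "f' x = D 1 x" if x: "x \<in> {l..u}" for x
  proof (rule vector_derivative_unique_within_closed_interval[OF lu])
    show "x \<in> cbox l u" using x by simp
    show "(f has_vector_derivative f' x) (at x within cbox l u)"
      using deriv x by (simp add: has_real_derivative_iff_has_vector_derivative)
    have "(D 0 has_real_derivative D 1 x) (at x within {l..u})" using D k x by simp
    then have "(f has_real_derivative D 1 x) (at x within {l..u})"
      by (rule has_real_derivative_transform_within[OF x, rotated]) (simp add: D0)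
    then show "(f has_vector_derivative D 1 x) (at x within cbox l u)"
      by (simp add: has_real_derivative_iff_has_vector_derivative)
  qed
  moreover have "\<forall>x\<in>{l..u}. (D 1 has_real_derivative D (Suc 1) x) (at x within {l..u})" using D k by blast
  then have "continuous_on {l..u} (D 1)" by (intro DERIV_continuous_on) blast
  ultimately show ?thesis using continuous_on_cong by blast
qed

theorem lemma3p1:
  fixes alpha :: real and rho rhop H Hp :: "real \<Rightarrow> real"
  assumes alpha: "0 < alpha" "alpha < 1"
    and rho_reg: "C_k_alpha 2 alpha {-1..0} rho"
    and H_reg: "C_k_alpha 3 alpha {-1..0} H"
    and rho_deriv: "\<forall>x\<in>{-1..0}. (rho has_real_derivative rhop x) (at x within {-1..0})"
    and H_deriv: "\<forall>x\<in>{-1..0}. (H has_real_derivative Hp x) (at x within {-1..0})"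
    and rho_pos: "\<forall>x\<in>{-1..0}. rho x > 0"
    and rhop_nonpos: "\<forall>x\<in>{-1..0}. rhop x \<le> 0"
    and Hp_pos: "\<forall>x\<in>{-1..0}. Hp x > 0"
  shows "\<exists>!mucr. mucr > 0 \<and>
     \<comment> \<open>(a)\<close>
     (\<exists>w w'. is_bvp_sol Hp rho rhop mucr w w' \<and> (\<exists>p\<in>{-1..0}. w p \<noteq> 0)) \<and>
     is_bvp_sol Hp rho rhop mucr (Phi Hp rhop mucr) (Phi_p Hp rhop mucr) \<and>
     (\<exists>p\<in>{-1..0}. Phi Hp rhop mucr p \<noteq> 0) \<and>
     \<comment> \<open>(b)\<close>
     (\<forall>mu. 0 \<le> mu \<and> mu \<le> mucr \<longrightarrow>
        (\<forall>p\<in>{-1<..0}. Phi Hp rhop mu p > 0) \<and>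
        (\<forall>p\<in>{-1..0}. Phi_p Hp rhop mu p > 0)) \<and>
     \<comment> \<open>(c)\<close>
     (\<forall>mu. 0 \<le> mu \<and> mu < mucr \<longrightarrow> A_fun Hp rho rhop mu < 0)"
proof -
  interpret Phi_problem rho rhop Hp
    using C_k_alpha_derivative_continuous[OF H_reg _ _ H_deriv]
      C_k_alpha_derivative_continuous[OF rho_reg _ _ rho_deriv] Hp_pos rho_pos rhop_nonpos
    by unfold_locales auto
  obtain m where m: "0 < m" "\<forall>p\<in>{-1..0}. 0 < flux m p" "A m = 0"
    and below: "\<And>mu. 0 \<le> mu \<Longrightarrow> mu < m \<Longrightarrow> admissible mu"
    by (rule critical_mu_exists) blast
  have flux_pos: "\<forall>p\<in>{-1..0}. 0 < flux mu p" if "0 \<le> mu" "mu \<le> m" for mu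
    using m(2) below[OF that(1)] that(2) unfolding admissible_def by (cases "mu = m") auto
  have bvp: "is_bvp_sol Hp rho rhop m (phi m) (Phi_p Hp rhop m)" using is_bvp_sol_Phi_iff m(3) by blast
  have nontrivial: "\<exists>p\<in>{-1..0}. phi m p \<noteq> 0"
    using Phi_pos_if_flux_pos[OF m(2), of 0] by (intro bexI[of _ 0]) auto
  show ?thesis (is "\<exists>!mucr. ?P mucr")
  proof (rule ex1I[of _ m], intro conjI)
    show "\<exists>w w'. is_bvp_sol Hp rho rhop m w w' \<and> (\<exists>p\<in>{-1..0}. w p \<noteq> 0)"
      using bvp nontrivial by blast
    show "\<forall>mu. 0 \<le> mu \<and> mu \<le> m \<longrightarrow>
        (\<forall>p\<in>{-1<..0}. 0 < phi mu p) \<and> (\<forall>p\<in>{-1..0}. 0 < Phi_p Hp rhop mu p)"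
      using flux_pos Phi_pos_if_flux_pos Phi_p_pos_if_flux_pos by blast
    show "\<forall>mu. 0 \<le> mu \<and> mu < m \<longrightarrow> A mu < 0" using below unfolding admissible_def by blast
  next
    fix m' assume "?P m'"
    then have "0 < m'" "A m' = 0" and A_below: "\<forall>mu. 0 \<le> mu \<and> mu < m' \<longrightarrow> A mu < 0"
      using is_bvp_sol_Phi_iff by auto
    then have "\<not> m < m'" "\<not> m' < m"
      using A_below[rule_format, of m] below[of m'] m(1,3) unfolding admissible_def by auto
    then show "m' = m" by linarith
  qed (use m(1) bvp nontrivial in auto)
qed

end
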